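(* Let $n,m\ge 1$, let $\boldsymbol{W}\in\mathbb{R}^{n\times n}$ be symmetric with non-negative entries, $\boldsymbol{S}=(s_{kr})\in[0,1]^{m\times m}$ symmetric with $s_{kk}=0$, $\boldsymbol{\gamma}\in\mathbb{R}^m$, $\boldsymbol{\rho}\in[\frac{\pi}{4},\frac{\pi}{2})^m$, $\alpha\in\mathbb{R}$, and $S_k=\sum_{r}s_{kr}$. Let the neuron set $V=\{1,\dots,n\}$ be bipartitioned as $V=U\cup L$ with $U=\{1,\dots,h\}$, $L=\{h+1,\dots,n\}$. The state space $\mathcal{X}$ consists of matrices $\boldsymbol{X}=(x_{ik})_{i\in V,1\le k\le m}$ with $x_{ik}\in\{\sin\rho_k,-\cos\rho_k\}$, written $\boldsymbol{X}=(\boldsymbol{L},\boldsymbol{U})$ with $\boldsymbol{L}$ the rows indexed by $L$ and $\boldsymbol{U}$ the rows indexed by $U$. Define the energy of the multitask Hopfield network $\mathcal{H}=\langle\boldsymbol{W},\boldsymbol{\gamma},\boldsymbol{\rho},\boldsymbol{S}\rangle$ as $$E_{\mathcal{H}}(\boldsymbol{X})=\sum_{k=1}^m\Big(-\tfrac12 {\boldsymbol{x}^{(k)}}^T\boldsymbol{W}\boldsymbol{x}^{(k)}+\gamma_k\sum_{i=1}^n x_{ik}+\tfrac{\alpha}{2}\Big(S_k\sum_{i=1}^n x_{ik}^2-\sum_{r\ne k}s_{kr}\sum_{i=1}^n x_{ik}x_{ir}\Big)\Big),$$ and, for a fixed $\boldsymbol{L}=(\boldsymbol{l}^{(1)},\dots,\boldsymbol{l}^{(m)})$,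 the energy of the subnetwork $\mathcal{H}_U=\langle\boldsymbol{W}_{UU},\boldsymbol{\gamma},\boldsymbol{\rho},\boldsymbol{S}\rangle$ restricted to $U$ (with labeled neurons clamped to $\boldsymbol{L}$) as $$E_{\mathcal{H}_U}(\boldsymbol{U})=\sum_{k=1}^m\Big(-\tfrac12 {\boldsymbol{u}^{(k)}}^T\boldsymbol{W}_{UU}\boldsymbol{u}^{(k)}+{\boldsymbol{u}^{(k)}}^T\big(\gamma_k\boldsymbol{e}_h-\boldsymbol{W}_{UL}\boldsymbol{l}^{(k)}\big)+\tfrac{\alpha}{2}\Big(S_k\sum_{i=1}^h u_{ik}^2-\sum_{r\ne k}s_{kr}\sum_{i=1}^h u_{ik}u_{ir}\Big)\Big),$$ where $\boldsymbol{u}^{(k)}$ is the $k$-th column of $\boldsymbol{U}$, $\boldsymbol{e}_h$ the all-ones vector of length $h$, and $\boldsymbol{W}_{UU},\boldsymbol{W}_{UL}$ the submatrices of $\boldsymbol{W}$ with rows in $U$ and columns in $U$, resp. $L$. If $\boldsymbol{L}$ is part of a global minimum of $E_{\mathcal{H}}$ (i.e. there exists $\boldsymbol{U}^*$ such that $(\boldsymbol{L},\boldsymbol{U}^* )$ minimizes $E_{\mathcal{H}}$ over $\mathcal{X}$) and $\boldsymbol{U}$ is a global minimum of $E_{\mathcal{H}_U}$, then $(\boldsymbol{L},\boldsymbol{U})$ is a global minimum of $E_{\mathcal{H}}$.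
   Context: $\boldsymbol{x}^{(k)}$ denotes the $k$-th column of $\boldsymbol{X}$ (the state vector for task $k$). In $\mathcal{H}_U$ the contribution of the labeled neurons, whose states are fixed to $\boldsymbol{L}$, is absorbed into the activation thresholds $\gamma_k\boldsymbol{e}_h-\boldsymbol{W}_{UL}\boldsymbol{l}^{(k)}$. *)

theory Defs
  imports Complex_Main
begin

text \<open>Conventions: neurons are indexed 0..<n, tasks 0..<m (0-based instead of
1-based). The unlabeled block U is {0..<h}, the labeled block L is {h..<n}.
Matrices are functions nat => nat => real; only entries in range matter.\<close>

definition state_space :: "nat \<Rightarrow> nat \<Rightarrow> (nat \<Rightarrow> real) \<Rightarrow> (nat \<Rightarrow> nat \<Rightarrow> real) set" where
  "state_space n m \<rho> = {X. \<forall>i<n. \<forall>k<m. X i k \<in> {sin (\<rho> k), - cos (\<rho> k)}}"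

definition sub_state_space :: "nat \<Rightarrow> nat \<Rightarrow> (nat \<Rightarrow> real) \<Rightarrow> (nat \<Rightarrow> nat \<Rightarrow> real) set" where
  "sub_state_space h m \<rho> = state_space h m \<rho>"

definition join_state :: "nat \<Rightarrow> (nat \<Rightarrow> nat \<Rightarrow> real) \<Rightarrow> (nat \<Rightarrow> nat \<Rightarrow> real) \<Rightarrow> nat \<Rightarrow> nat \<Rightarrow> real" where
  "join_state h Lm Um = (\<lambda>i k. if i < h then Um i k else Lm i k)"

definition Ssum :: "nat \<Rightarrow> (nat \<Rightarrow> nat \<Rightarrow> real) \<Rightarrow> nat \<Rightarrow> real" where
  "Ssum m S k = (\<Sum>r<m. S k r)"

definition energy ::
  "nat \<Rightarrow> nat \<Rightarrow> (nat \<Rightarrow> nat \<Rightarrow> real) \<Rightarrow> (nat \<Rightarrow> real) \<Rightarrow> (nat \<Rightarrow> nat \<Rightarrow> real) \<Rightarrow> real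
   \<Rightarrow> (nat \<Rightarrow> nat \<Rightarrow> real) \<Rightarrow> real" where
  "energy n m W \<gamma> S \<alpha> X =
    (\<Sum>k<m. - (1/2) * (\<Sum>i<n. \<Sum>j<n. X i k * W i j * X j k)
            + \<gamma> k * (\<Sum>i<n. X i k)
            + (\<alpha>/2) * (Ssum m S k * (\<Sum>i<n. (X i k)\<^sup>2)
                        - (\<Sum>r\<in>{r. r < m \<and> r \<noteq> k}. S k r * (\<Sum>i<n. X i k * X i r))))"

definition sub_energy ::
  "nat \<Rightarrow> nat \<Rightarrow> nat \<Rightarrow> (nat \<Rightarrow> nat \<Rightarrow> real) \<Rightarrow> (nat \<Rightarrow> real) \<Rightarrow> (nat \<Rightarrow> nat \<Rightarrow> real) \<Rightarrow> real
   \<Rightarrow> (nat \<Rightarrow> nat \<Rightarrow> real) \<Rightarrow> (nat \<Rightarrow> nat \<Rightarrow> real) \<Rightarrow> real" where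
  "sub_energy n h m W \<gamma> S \<alpha> Lm Um =
    (\<Sum>k<m. - (1/2) * (\<Sum>i<h. \<Sum>j<h. Um i k * W i j * Um j k)
            + (\<Sum>i<h. Um i k * (\<gamma> k - (\<Sum>j\<in>{h..<n}. W i j * Lm j k)))
            + (\<alpha>/2) * (Ssum m S k * (\<Sum>i<h. (Um i k)\<^sup>2)
                        - (\<Sum>r\<in>{r. r < m \<and> r \<noteq> k}. S k r * (\<Sum>i<h. Um i k * Um i r))))"

end

theory Submission
  imports Defs
begin

text \<open>With the labeled rows clamped to \<open>L\<close>, the energy of \<open>(L, U)\<close> splits as
\<open>E\<^sub>H\<^sub>U(U)\<close> plus a constant depending on \<open>L\<close> only: every term of \<open>E\<^sub>H\<close> is a sum over
neurons (or pairs of neurons), and splitting neurons into \<open>U\<close> and \<open>L\<close> leaves only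
the quadratic cross terms mixing the two blocks; by symmetry of \<open>W\<close> they occur twice,
so the factor \<open>-1/2\<close> turns them into the shifted thresholds \<open>-W\<^sub>U\<^sub>L l\<^sub>k\<close>.
Hence \<open>U\<close> minimises \<open>E\<^sub>H\<^sub>U\<close> iff \<open>(L, U)\<close> minimises \<open>E\<^sub>H\<close> among states with labeled part \<open>L\<close>,
and comparing with the global minimiser \<open>(L, U\<^sup>*)\<close> gives the claim. Besides \<open>h \<le> n\<close>, only the symmetry
of \<open>W\<close> is used.\<close>

lemma sum_lessThan_split:
  fixes f :: "nat \<Rightarrow> 'a::comm_monoid_add"
  assumes "h \<le> n"
  shows "(\<Sum>i<n. f i) = (\<Sum>i<h. f i) + (\<Sum>i\<in>{h..<n}. f i)"
  using sum.atLeastLessThan_concat[of 0 h n f] assms by (simp add: atLeast0LessThan)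

lemma sum_join_state:
  assumes "h \<le> n"
  shows "(\<Sum>i<n. g (join_state h L U i)) = (\<Sum>i<h. g (U i)) + (\<Sum>i\<in>{h..<n}. g (L i))"
  using sum_lessThan_split[OF assms, of "\<lambda>i. g (join_state h L U i)"] by (simp add: join_state_def)

lemma quadratic_form_join_state:
  fixes W L U :: "nat \<Rightarrow> nat \<Rightarrow> real"
  assumes hn: "h \<le> n" and sym: "\<forall>i<n. \<forall>j<n. W i j = W j i"
  shows "(\<Sum>i<n. \<Sum>j<n. join_state h L U i k * W i j * join_state h L U j k)
       = (\<Sum>i<h. \<Sum>j<h. U i k * W i j * U j k)
         + 2 * (\<Sum>i<h. U i k * (\<Sum>j\<in>{h..<n}. W i j * L j k))
         + (\<Sum>i\<in>{h..<n}. \<Sum>j\<in>{h..<n}. L i k * W i j * L j k)"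
proof -
  define cross where "cross = (\<Sum>i<h. U i k * (\<Sum>j\<in>{h..<n}. W i j * L j k))"
  have upper_cross: "(\<Sum>i<h. \<Sum>j\<in>{h..<n}. U i k * W i j * L j k) = cross"
    by (simp add: cross_def sum_distrib_left mult.assoc)
  have "(\<Sum>i\<in>{h..<n}. \<Sum>j<h. L i k * W i j * U j k) = (\<Sum>j<h. \<Sum>i\<in>{h..<n}. L i k * W i j * U j k)"
    by (rule sum.swap)
  also have "\<dots> = (\<Sum>j<h. \<Sum>i\<in>{h..<n}. U j k * W j i * L i k)"
    using sym hn by (intro sum.cong refl) (auto simp: mult_ac)
  finally have lower_cross: "(\<Sum>i\<in>{h..<n}. \<Sum>j<h. L i k * W i j * U j k) = cross"
    using upper_cross by simp
  show ?thesis
    unfolding sum_lessThan_split[OF hn] sum.distrib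
    using upper_cross lower_cross by (simp add: join_state_def cross_def)
qed

definition labeled_energy ::
  "nat \<Rightarrow> nat \<Rightarrow> nat \<Rightarrow> (nat \<Rightarrow> nat \<Rightarrow> real) \<Rightarrow> (nat \<Rightarrow> real) \<Rightarrow> (nat \<Rightarrow> nat \<Rightarrow> real) \<Rightarrow> real
   \<Rightarrow> (nat \<Rightarrow> nat \<Rightarrow> real) \<Rightarrow> real" where
  "labeled_energy n h m W \<gamma> S \<alpha> L =
    (\<Sum>k<m. - (1/2) * (\<Sum>i\<in>{h..<n}. \<Sum>j\<in>{h..<n}. L i k * W i j * L j k)
            + \<gamma> k * (\<Sum>i\<in>{h..<n}. L i k)
            + (\<alpha>/2) * (Ssum m S k * (\<Sum>i\<in>{h..<n}. (L i k)\<^sup>2)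
                        - (\<Sum>r\<in>{r. r < m \<and> r \<noteq> k}. S k r * (\<Sum>i\<in>{h..<n}. L i k * L i r))))"

lemma energy_join_state:
  assumes hn: "h \<le> n" and sym: "\<forall>i<n. \<forall>j<n. W i j = W j i"
  shows "energy n m W \<gamma> S \<alpha> (join_state h L U)
       = sub_energy n h m W \<gamma> S \<alpha> L U + labeled_energy n h m W \<gamma> S \<alpha> L"
proof -
  have activation: "(\<Sum>i<n. join_state h L U i k) = (\<Sum>i<h. U i k) + (\<Sum>i\<in>{h..<n}. L i k)" for k
    using sum_join_state[OF hn, of "\<lambda>x. x k"] by simp
  have square: "(\<Sum>i<n. (join_state h L U i k)\<^sup>2) = (\<Sum>i<h. (U i k)\<^sup>2) + (\<Sum>i\<in>{h..<n}. (L i k)\<^sup>2)"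
    for k
    using sum_join_state[OF hn, of "\<lambda>x. (x k)\<^sup>2"] by simp
  have coupling: "(\<Sum>r\<in>R. S k r * (\<Sum>i<n. join_state h L U i k * join_state h L U i r))
     = (\<Sum>r\<in>R. S k r * (\<Sum>i<h. U i k * U i r)) + (\<Sum>r\<in>R. S k r * (\<Sum>i\<in>{h..<n}. L i k * L i r))"
    for k R
    using sum_join_state[OF hn, of "\<lambda>x. x k * x _"] by (simp add: distrib_left sum.distrib)
  have threshold: "(\<Sum>i<h. U i k * (\<gamma> k - (\<Sum>j\<in>{h..<n}. W i j * L j k)))
     = \<gamma> k * (\<Sum>i<h. U i k) - (\<Sum>i<h. U i k * (\<Sum>j\<in>{h..<n}. W i j * L j k))" for k
    by (simp add: right_diff_distrib sum_subtractf sum_distrib_left mult.commute)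
  show ?thesis
    unfolding energy_def sub_energy_def labeled_energy_def sum.distrib[symmetric]
    by (intro sum.cong refl)
      (simp only: quadratic_form_join_state[OF hn sym] activation square coupling threshold,
       simp add: field_simps)
qed

lemma join_state_in_state_space_iff:
  assumes "h \<le> n"
  shows "join_state h L U \<in> state_space n m \<rho> \<longleftrightarrow>
         U \<in> sub_state_space h m \<rho> \<and> (\<forall>i\<in>{h..<n}. \<forall>k<m. L i k \<in> {sin (\<rho> k), - cos (\<rho> k)})"
  using assms unfolding sub_state_space_def state_space_def
  by (auto simp: join_state_def split: if_splits) (metis less_le_trans not_le)+

theorem theorem3:
  fixes n m h :: nat and W S :: "nat \<Rightarrow> nat \<Rightarrow> real" and \<gamma> \<rho> :: "nat \<Rightarrow> real"
    and \<alpha> :: real and Lm Um :: "nat \<Rightarrow> nat \<Rightarrow> real"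
  assumes "n \<ge> 1" and "m \<ge> 1" and "h \<le> n"
    and "\<forall>i<n. \<forall>j<n. W i j = W j i \<and> W i j \<ge> 0"
    and "\<forall>k<m. \<forall>r<m. S k r = S r k \<and> 0 \<le> S k r \<and> S k r \<le> 1"
    and "\<forall>k<m. S k k = 0"
    and "\<forall>k<m. pi/4 \<le> \<rho> k \<and> \<rho> k < pi/2"
    and "\<exists>Ustar. join_state h Lm Ustar \<in> state_space n m \<rho> \<and>
           (\<forall>Y \<in> state_space n m \<rho>. energy n m W \<gamma> S \<alpha> (join_state h Lm Ustar) \<le> energy n m W \<gamma> S \<alpha> Y)"
    and "Um \<in> sub_state_space h m \<rho>"
    and "\<forall>U' \<in> sub_state_space h m \<rho>. sub_energy n h m W \<gamma> S \<alpha> Lm Um \<le> sub_energy n h m W \<gamma> S \<alpha> Lm U'"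
  shows "join_state h Lm Um \<in> state_space n m \<rho> \<and>
         (\<forall>Y \<in> state_space n m \<rho>. energy n m W \<gamma> S \<alpha> (join_state h Lm Um) \<le> energy n m W \<gamma> S \<alpha> Y)"
proof -
  obtain Ustar where Ustar_state: "join_state h Lm Ustar \<in> state_space n m \<rho>"
    and Ustar_min: "\<forall>Y \<in> state_space n m \<rho>. energy n m W \<gamma> S \<alpha> (join_state h Lm Ustar) \<le> energy n m W \<gamma> S \<alpha> Y"
    using assms(8) by blast
  have Ustar_sub: "Ustar \<in> sub_state_space h m \<rho>" and Um_state: "join_state h Lm Um \<in> state_space n m \<rho>"
    using Ustar_state assms(9) join_state_in_state_space_iff[OF assms(3)] by blast+
  have "energy n m W \<gamma> S \<alpha> (join_state h Lm Um) \<le> energy n m W \<gamma> S \<alpha> (join_state h Lm Ustar)"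
    using assms(10) Ustar_sub energy_join_state[OF assms(3)] assms(4) by simp
  then show ?thesis
    using Um_state Ustar_min by fastforce
qed

end
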